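(* If $G$ is a minimally $1/2$-tough claw-free graph, then every cycle of $G$ has length $3$.
   Context: All graphs are finite, simple and undirected. A graph is claw-free if it contains no induced subgraph isomorphic to $K_{1,3}$. $\omega(H)$ denotes the number of components of $H$. A cutset of $G$ is a vertex set $S$ with $G-S$ disconnected. For positive real $t$, $G$ is $t$-tough if $\omega(G-S)\le |S|/t$ for every cutset $S$; the toughness $\tau(G)$ is the largest such $t$, with $\tau(K_n)=\infty$ for all $n\ge1$. $G$ is minimally $t$-tough if $\tau(G)=t$ and $\tau(G-e)<t$ for every edge $e$ of $G$. *)

theory Defs
  imports Complex_Main "HOL-Library.Extended_Real"
begin

definition simple_graph :: "'a set \<Rightarrow> 'a set set \<Rightarrow> bool" where
  "simple_graph V E \<longleftrightarrow> finite V \<and>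
     (\<forall>e\<in>E. \<exists>u v. e = {u, v} \<and> u \<in> V \<and> v \<in> V \<and> u \<noteq> v)"

definition reach_in :: "'a set set \<Rightarrow> 'a set \<Rightarrow> 'a \<Rightarrow> 'a \<Rightarrow> bool" where
  "reach_in E W = (\<lambda>x y. x \<in> W \<and> y \<in> W \<and> {x, y} \<in> E)\<^sup>*\<^sup>*"

definition components :: "'a set set \<Rightarrow> 'a set \<Rightarrow> 'a set set" where
  "components E W = {{y. reach_in E W x y} | x. x \<in> W}"

definition num_comp :: "'a set \<Rightarrow> 'a set set \<Rightarrow> 'a set \<Rightarrow> nat" where
  "num_comp V E S = card (components E (V - S))"

definition cutset :: "'a set \<Rightarrow> 'a set set \<Rightarrow> 'a set \<Rightarrow> bool" where
  "cutset V E S \<longleftrightarrow> S \<subseteq> V \<and> num_comp V E S \<ge> 2"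

definition tough :: "'a set \<Rightarrow> 'a set set \<Rightarrow> real \<Rightarrow> bool" where
  "tough V E t \<longleftrightarrow> (\<forall>S. cutset V E S \<longrightarrow> real (num_comp V E S) \<le> real (card S) / t)"

text \<open>Toughness: the largest positive t such that G is t-tough (infinity if G is
  t-tough for all t, e.g. complete graphs; 0 if G is t-tough for no positive t).\<close>
definition toughness :: "'a set \<Rightarrow> 'a set set \<Rightarrow> ereal" where
  "toughness V E = Sup ({0} \<union> {ereal t | t. 0 < t \<and> tough V E t})"

definition minimally_tough :: "'a set \<Rightarrow> 'a set set \<Rightarrow> real \<Rightarrow> bool" where
  "minimally_tough V E t \<longleftrightarrow> toughness V E = ereal t \<and>
     (\<forall>e\<in>E. toughness V (E - {e}) < ereal t)"

definition claw_free :: "'a set \<Rightarrow> 'a set set \<Rightarrow> bool" where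
  "claw_free V E \<longleftrightarrow> \<not> (\<exists>c a b d. c \<in> V \<and> a \<in> V \<and> b \<in> V \<and> d \<in> V \<and>
     distinct [c, a, b, d] \<and> {c, a} \<in> E \<and> {c, b} \<in> E \<and> {c, d} \<in> E \<and>
     {a, b} \<notin> E \<and> {a, d} \<notin> E \<and> {b, d} \<notin> E)"

definition is_cycle :: "'a set \<Rightarrow> 'a set set \<Rightarrow> 'a list \<Rightarrow> bool" where
  "is_cycle V E vs \<longleftrightarrow> length vs \<ge> 3 \<and> distinct vs \<and> set vs \<subseteq> V \<and>
     (\<forall>i < length vs. {vs ! i, vs ! ((i + 1) mod length vs)} \<in> E)"

end

theory Submission
  imports Defs
begin

text \<open>Let uv be an edge of a cycle. Since G - uv is not 1/2-tough, some S leaves more than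
  2|S| components in G - uv - S. As G is 1/2-tough, uv joins two of them, and as G is claw-free,
  putting a vertex of S back merges at most two components; together this forces S = {s}.
  Connectivity of G - uv makes s adjacent to every component of G - uv - s, and
  claw-freeness at s then shows that s is a common neighbour of u and v.
  For an edge of a cycle of length at least 4 this s lies on the cycle, so one of su, sv is a
  chord. But the two ends of a chord are joined by two internally disjoint arcs of the cycle,
  which no single vertex s can both destroy.\<close>

section \<open>Reachability and components\<close>

lemma reach_in_refl: "reach_in E W x x"
  unfolding reach_in_def by simp

lemma reach_in_trans: "reach_in E W x y \<Longrightarrow> reach_in E W y z \<Longrightarrow> reach_in E W x z"
  unfolding reach_in_def by (rule rtranclp_trans)

lemma reach_in_sym:
  assumes "reach_in E W x y" shows "reach_in E W y x"
proof -
  have "symp (\<lambda>x y. x \<in> W \<and> y \<in> W \<and> {x, y} \<in> E)"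
    by (auto intro!: sympI simp: insert_commute)
  then show ?thesis
    using assms unfolding reach_in_def by (blast dest: sympD[OF symp_rtranclp])
qed

lemma reach_in_edge: "x \<in> W \<Longrightarrow> y \<in> W \<Longrightarrow> {x, y} \<in> E \<Longrightarrow> reach_in E W x y"
  unfolding reach_in_def by (rule r_into_rtranclp) simp

lemma reach_in_closed: "reach_in E W x y \<Longrightarrow> x \<in> W \<Longrightarrow> y \<in> W"
  unfolding reach_in_def by (induction rule: rtranclp_induct) auto

lemma reach_in_mono: "reach_in E W x y \<Longrightarrow> E \<subseteq> E' \<Longrightarrow> W \<subseteq> W' \<Longrightarrow> reach_in E' W' x y"
  unfolding reach_in_def by (erule rtranclp_mono[THEN predicate2D, rotated]) auto

lemma reach_in_walk:
  assumes "i \<le> m"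
    and "\<And>l. i \<le> l \<Longrightarrow> l < m \<Longrightarrow> {f l, f (Suc l)} \<in> E"
    and "\<And>l. i \<le> l \<Longrightarrow> l \<le> m \<Longrightarrow> f l \<in> W"
  shows "reach_in E W (f i) (f m)"
  using assms
proof (induction m rule: dec_induct)
  case base
  show ?case by (rule reach_in_refl)
next
  case (step m)
  have "reach_in E W (f i) (f m)" by (rule step.IH) (use step in auto)
  moreover have "reach_in E W (f m) (f (Suc m))"
    by (rule reach_in_edge) (use step in auto)
  ultimately show ?case by (rule reach_in_trans)
qed

lemma reach_in_Diff_edge:
  assumes "\<And>x y. x \<in> W \<Longrightarrow> y \<in> W \<Longrightarrow> {x, y} = e \<Longrightarrow> reach_in (E - {e}) W x y"
  shows "reach_in (E - {e}) W = reach_in E W"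
proof (intro ext iffI)
  fix a b assume "reach_in E W a b"
  then show "reach_in (E - {e}) W a b" unfolding reach_in_def
  proof (induction rule: rtranclp_induct)
    case (step y z)
    show ?case
    proof (cases "{y, z} = e")
      case True
      have "reach_in (E - {e}) W y z" using step(2) True by (intro assms) auto
      with step(3) show ?thesis unfolding reach_in_def by (rule rtranclp_trans)
    next
      case False
      with step show ?thesis by (auto intro: rtranclp.rtrancl_into_rtrancl)
    qed
  qed simp
qed (rule reach_in_mono, auto)

lemma reach_in_Diff_edge_if_reach:
  assumes "reach_in (E - {{u, v}}) W u v"
  shows "reach_in (E - {{u, v}}) W = reach_in E W"
proof (rule reach_in_Diff_edge)
  fix x y assume "{x, y} = {u, v}"
  then show "reach_in (E - {{u, v}}) W x y"
    using assms reach_in_sym by (metis doubleton_eq_iff)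
qed

lemma components_subset: "C \<in> components E W \<Longrightarrow> C \<subseteq> W"
  unfolding components_def using reach_in_closed by fastforce

lemma finite_components: "finite W \<Longrightarrow> finite (components E W)"
  by (meson Pow_iff components_subset finite_Pow_iff rev_finite_subset subsetI)

lemma component_of: "w \<in> W \<Longrightarrow> {y. reach_in E W w y} \<in> components E W"
  unfolding components_def by blast

lemma component_eq_reach:
  assumes "C \<in> components E W" "w \<in> C"
  shows "C = {y. reach_in E W w y}"
proof -
  obtain x where x: "C = {y. reach_in E W x y}" using assms(1) unfolding components_def by blast
  then have "reach_in E W x w" using assms(2) by blast
  then show ?thesis using x by (blast intro: reach_in_trans reach_in_sym)
qed

lemma components_eqI:
  "C \<in> components E W \<Longrightarrow> D \<in> components E W \<Longrightarrow> w \<in> C \<Longrightarrow> w \<in> D \<Longrightarrow> C = D"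
  using component_eq_reach by metis

lemma components_nonadjacent:
  assumes "x \<in> C" "y \<in> D" "C \<in> components E W" "D \<in> components E W" "C \<noteq> D"
  shows "{x, y} \<notin> E"
proof
  assume "{x, y} \<in> E"
  then have "reach_in E W x y"
    using assms components_subset by (blast intro: reach_in_edge)
  then have "y \<in> C" using component_eq_reach[OF assms(3,1)] by blast
  then show False using components_eqI[OF assms(3,4) _ assms(2)] assms(5) by blast
qed

lemma component_insert_vertex:
  assumes C: "C \<in> components E W" and nb: "\<not> (\<exists>y\<in>C. {s, y} \<in> E)"
  shows "C \<in> components E (insert s W)"
proof -
  obtain x where x: "x \<in> W" "C = {y. reach_in E W x y}" using C unfolding components_def by blast
  have "reach_in E W x y" if "reach_in E (insert s W) x y" for y
    using that unfolding reach_in_def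
  proof (induction rule: rtranclp_induct)
    case (step y z)
    then have "y \<in> C" using x(2) unfolding reach_in_def by simp
    then have "y \<in> W" "z \<noteq> s" using nb step(2) components_subset[OF C] by (auto simp: insert_commute)
    with step show ?case by (auto intro: rtranclp.rtrancl_into_rtrancl)
  qed simp
  then have "C = {y. reach_in E (insert s W) x y}"
    using x(2) reach_in_mono[of E W x _ E "insert s W"] by blast
  then show ?thesis using x(1) component_of[of x "insert s W" E] by simp
qed

lemma component_has_neighbour:
  assumes fin: "finite V" and conn: "card (components E V) \<le> 1" and s: "s \<in> V"
    and C: "C \<in> components E (V - {s})"
  shows "\<exists>y\<in>C. {s, y} \<in> E"
proof (rule ccontr)
  assume "\<not> (\<exists>y\<in>C. {s, y} \<in> E)"
  then have "C \<in> components E (insert s (V - {s}))" by (rule component_insert_vertex[OF C])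
  then have "C \<in> components E V" using s by (simp add: insert_absorb)
  moreover have "{y. reach_in E V s y} \<in> components E V" by (rule component_of[OF s])
  ultimately have "C = {y. reach_in E V s y}"
    using conn finite_components[OF fin] by (metis One_nat_def card_le_Suc0_iff_eq)
  then have "s \<in> C" by (simp add: reach_in_refl)
  then show False using components_subset[OF C] by blast
qed

lemma card_components_Diff_edge_le:
  assumes fin: "finite W" and u: "u \<in> W"
  shows "card (components (E - {{u, v}}) W) \<le> card (components E W) + 1"
proof -
  let ?E' = "E - {{u, v}}"
  let ?Cu' = "{y. reach_in ?E' W u y}" and ?Cv' = "{y. reach_in ?E' W v y}"
  let ?Cu = "{y. reach_in E W u y}"
  have sub: "components ?E' W - {?Cu', ?Cv'} \<subseteq> components E W - {?Cu}"
  proof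
    fix C assume C: "C \<in> components ?E' W - {?Cu', ?Cv'}"
    then have CE': "C \<in> components ?E' W" by blast
    then obtain x where x: "x \<in> W" "C = {y. reach_in ?E' W x y}"
      unfolding components_def by blast
    have uv: "u \<notin> C" "v \<notin> C" using C component_eq_reach[OF CE'] by blast+
    have "reach_in ?E' W x y" if "reach_in E W x y" for y
      using that unfolding reach_in_def
    proof (induction rule: rtranclp_induct)
      case (step y z)
      then have "y \<in> C" using x(2) unfolding reach_in_def by simp
      then have "{y, z} \<noteq> {u, v}" using uv by (auto simp: doubleton_eq_iff)
      with step show ?case by (auto intro: rtranclp.rtrancl_into_rtrancl)
    qed simp
    then have "C = {y. reach_in E W x y}"
      using x(2) reach_in_mono[of ?E' W x _ E W] by blast
    moreover have "C \<noteq> ?Cu" using uv reach_in_refl[of E W u] by blast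
    ultimately show "C \<in> components E W - {?Cu}" using component_of[OF x(1)] by blast
  qed
  have finE: "finite (components E W)" using finite_components fin by blast
  have Cu: "?Cu \<in> components E W" by (rule component_of[OF u])
  have "card (components ?E' W) - card {?Cu', ?Cv'} \<le> card (components ?E' W - {?Cu', ?Cv'})"
    by (rule diff_card_le_card_Diff) simp
  also have "\<dots> \<le> card (components E W - {?Cu})"
    using card_mono[OF _ sub] finE by blast
  also have "\<dots> = card (components E W) - 1" by (rule card_Diff_singleton[OF Cu])
  finally have "card (components ?E' W) - card {?Cu', ?Cv'} \<le> card (components E W) - 1" .
  moreover have "card {?Cu', ?Cv'} \<le> 2" by (simp add: card_insert_le_m1)
  moreover have "card (components E W) \<ge> 1" using Cu finE card_0_eq by fastforce
  ultimately show ?thesis by linarith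
qed

lemma card_components_insert_ge:
  fixes E :: "'a set set"
  assumes fin: "finite W" and s: "s \<notin> W"
  defines "N \<equiv> {C \<in> components E W. \<exists>y\<in>C. {s, y} \<in> E}"
  shows "card (components E W) + 1 \<le> card (components E (insert s W)) + card N"
proof -
  let ?Cs = "{y. reach_in E (insert s W) s y}"
  have finW: "finite (components E W)" by (rule finite_components[OF fin])
  have NW: "N \<subseteq> components E W" unfolding N_def by blast
  have "components E W - N \<subseteq> components E (insert s W)"
  proof
    fix C assume "C \<in> components E W - N"
    then have "C \<in> components E W" "\<not> (\<exists>y\<in>C. {s, y} \<in> E)" unfolding N_def by auto
    then show "C \<in> components E (insert s W)" by (rule component_insert_vertex)
  qed
  moreover have "?Cs \<in> components E (insert s W)" by (rule component_of) simp
  ultimately have sub: "insert ?Cs (components E W - N) \<subseteq> components E (insert s W)" by simp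
  have "?Cs \<notin> components E W"
    using components_subset s reach_in_refl[of E "insert s W" s] by blast
  then have "card (insert ?Cs (components E W - N)) = card (components E W - N) + 1"
    using finW by simp
  also have "card (components E W - N) = card (components E W) - card N"
    using NW finW by (simp add: card_Diff_subset finite_subset)
  finally have "card (components E W) - card N + 1 \<le> card (components E (insert s W))"
    using card_mono[OF finite_components[OF finite.insertI[OF fin]] sub] by simp
  moreover have "card N \<le> card (components E W)" using NW finW card_mono by blast
  ultimately show ?thesis by linarith
qed

section \<open>Claw-freeness\<close>

lemma three_elements:
  assumes "3 \<le> card A"
  obtains x y z where "x \<in> A" "y \<in> A" "z \<in> A" "x \<noteq> y" "x \<noteq> z" "y \<noteq> z"
proof -
  have "Suc 2 \<le> card A" using assms by simp
  then obtain x B where B: "A = insert x B" "x \<notin> B" "2 \<le> card B"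
    using card_le_Suc_iff[THEN iffD1] by blast
  then have "Suc 1 \<le> card B" by simp
  then obtain y D where D: "B = insert y D" "y \<notin> D" "1 \<le> card D"
    using card_le_Suc_iff[THEN iffD1] by blast
  then have "Suc 0 \<le> card D" by simp
  then obtain z F where F: "D = insert z F" "z \<notin> F"
    using card_le_Suc_iff[THEN iffD1] by blast
  show ?thesis using that[of x y z] B D F by auto
qed

lemma claw_freeD:
  assumes "claw_free V E" "c \<in> V" "a \<in> V" "b \<in> V" "d \<in> V" "distinct [c, a, b, d]"
    and "{c, a} \<in> E" "{c, b} \<in> E" "{c, d} \<in> E" "{a, d} \<notin> E" "{b, d} \<notin> E"
  shows "{a, b} \<in> E"
proof (rule ccontr)
  assume "{a, b} \<notin> E"
  with assms(2-) have "\<exists>c a b d. c \<in> V \<and> a \<in> V \<and> b \<in> V \<and> d \<in> V \<and>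
     distinct [c, a, b, d] \<and> {c, a} \<in> E \<and> {c, b} \<in> E \<and> {c, d} \<in> E \<and>
     {a, b} \<notin> E \<and> {a, d} \<notin> E \<and> {b, d} \<notin> E"
    by (intro exI[of _ c] exI[of _ a] exI[of _ b] exI[of _ d]) simp
  then show False using assms(1) unfolding claw_free_def by blast
qed

lemma claw_free_neighbour_components:
  assumes cf: "claw_free V E" and W: "W \<subseteq> V" and s: "s \<in> V" "s \<notin> W"
  shows "card {C \<in> components E W. \<exists>y\<in>C. {s, y} \<in> E} \<le> 2"
proof (rule ccontr)
  let ?N = "{C \<in> components E W. \<exists>y\<in>C. {s, y} \<in> E}"
  assume "\<not> card ?N \<le> 2"
  then have "3 \<le> card ?N" by simp
  then obtain C1 C2 C3
    where C: "C1 \<in> ?N" "C2 \<in> ?N" "C3 \<in> ?N" "C1 \<noteq> C2" "C1 \<noteq> C3" "C2 \<noteq> C3"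
    by (rule three_elements)
  then obtain a b d where abd: "a \<in> C1" "{s, a} \<in> E" "b \<in> C2" "{s, b} \<in> E" "d \<in> C3" "{s, d} \<in> E"
    by blast
  have comps: "C1 \<in> components E W" "C2 \<in> components E W" "C3 \<in> components E W"
    using C by auto
  have "a \<in> W" "b \<in> W" "d \<in> W" using abd comps components_subset by blast+
  moreover have "a \<noteq> b" "a \<noteq> d" "b \<noteq> d"
    using components_eqI[OF comps(1,2)] components_eqI[OF comps(1,3)] components_eqI[OF comps(2,3)]
      abd C(4-6) by blast+
  moreover have "{a, b} \<notin> E" "{a, d} \<notin> E" "{b, d} \<notin> E"
    using components_nonadjacent[OF _ _ comps(1,2)] components_nonadjacent[OF _ _ comps(1,3)]
      components_nonadjacent[OF _ _ comps(2,3)] abd C(4-6) by blast+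
  ultimately show False
    using claw_freeD[OF cf s(1), of a b d] W s abd by auto
qed

lemma claw_free_card_components_insert:
  assumes "claw_free V E" "finite W" "W \<subseteq> V" "s \<in> V" "s \<notin> W"
  shows "card (components E W) \<le> card (components E (insert s W)) + 1"
  using card_components_insert_ge[of W s E] claw_free_neighbour_components[of V E W s] assms
  by linarith

section \<open>Toughness\<close>

lemma tough_half_iff:
  "tough V E (1/2) \<longleftrightarrow> (\<forall>S. cutset V E S \<longrightarrow> num_comp V E S \<le> 2 * card S)"
  unfolding tough_def by auto

lemma tough_le_toughness: "0 < t \<Longrightarrow> tough V E t \<Longrightarrow> ereal t \<le> toughness V E"
  unfolding toughness_def by (rule Sup_upper) blast

lemma tough_toughness:
  assumes tv: "toughness V E = ereal t" and t: "0 < t"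
  shows "tough V E t"
  unfolding tough_def
proof (intro allI impI)
  fix S assume cs: "cutset V E S"
  define c where "c = real (num_comp V E S)"
  define n where "n = real (card S)"
  have c: "0 < c" using cs unfolding cutset_def c_def by simp
  show "c \<le> n / t"
  proof (rule ccontr)
    assume "\<not> c \<le> n / t"
    then have nct: "n / c < t" using c t by (simp add: field_simps)
    define t0 where "t0 = (n / c + t) / 2"
    have "0 \<le> n / c" using c by (simp add: n_def)
    then have t0: "0 < t0" "t0 < t" using nct unfolding t0_def by simp_all
    have "t' \<le> t0" if "0 < t'" "tough V E t'" for t'
    proof -
      have "c \<le> n / t'" using that(2) cs unfolding tough_def c_def n_def by blast
      then have "t' \<le> n / c" using that(1) c by (simp add: field_simps)
      then show ?thesis using nct unfolding t0_def by simp
    qed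
    then have "toughness V E \<le> ereal t0"
      unfolding toughness_def using t0 by (intro Sup_least) auto
    then show False using tv t0 by simp
  qed
qed

lemma connected_if_tough:
  assumes "tough V E t" "0 < t"
  shows "card (components E V) \<le> 1"
proof (rule ccontr)
  assume "\<not> card (components E V) \<le> 1"
  then have "cutset V E {}" unfolding cutset_def num_comp_def by simp
  then have "real (num_comp V E {}) \<le> 0"
    using assms(1) unfolding tough_def by fastforce
  then show False using \<open>\<not> card (components E V) \<le> 1\<close> unfolding num_comp_def by simp
qed

section \<open>The separator of a critical edge\<close>

lemma violating_set_separates_edge:
  assumes tough: "tough V E (1/2)" and cs: "cutset V (E - {{u, v}}) S"
    and big: "2 * card S < num_comp V (E - {{u, v}}) S"
  shows "u \<in> V - S" "v \<in> V - S" "\<not> reach_in (E - {{u, v}}) (V - S) u v"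
proof -
  let ?E' = "E - {{u, v}}" and ?W = "V - S"
  have "u \<in> ?W \<and> v \<in> ?W \<and> \<not> reach_in ?E' ?W u v"
  proof (rule ccontr)
    assume ns: "\<not> (u \<in> ?W \<and> v \<in> ?W \<and> \<not> reach_in ?E' ?W u v)"
    have "reach_in ?E' ?W = reach_in E ?W"
    proof (rule reach_in_Diff_edge)
      fix x y assume "x \<in> ?W" "y \<in> ?W" "{x, y} = {u, v}"
      then show "reach_in ?E' ?W x y" using ns reach_in_sym by (metis doubleton_eq_iff)
    qed
    then have "num_comp V ?E' S = num_comp V E S" unfolding num_comp_def components_def by simp
    then show False
      using tough cs big unfolding tough_half_iff cutset_def by (metis not_less)
  qed
  then show "u \<in> V - S" "v \<in> V - S" "\<not> reach_in ?E' ?W u v" by auto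
qed

lemma claw_free_violating_set_singleton:
  assumes fin: "finite V" and cf: "claw_free V E" and tough: "tough V E (1/2)"
    and SV: "S \<subseteq> V" and big: "2 * card S < card (components (E - {{u, v}}) (V - S))"
    and u: "u \<in> V - S" and reach: "reach_in (E - {{u, v}}) V u v"
    and sep: "\<not> reach_in (E - {{u, v}}) (V - S) u v"
  shows "card S = 1"
proof -
  have "S \<noteq> {}" using reach sep by auto
  moreover have "\<not> 2 \<le> card S"
  proof
    assume S2: "2 \<le> card S"
    obtain s where s: "s \<in> S" using \<open>S \<noteq> {}\<close> by blast
    let ?S0 = "S - {s}"
    have W: "finite (V - S)" "V - S \<subseteq> V" "s \<in> V" "s \<notin> V - S" using fin SV s by auto
    have "V - ?S0 = insert s (V - S)" using SV s by blast
    \<comment> \<open>putting s back merges at most two components, and restoring uv merges at most one more\<close>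
    then have "card (components E (V - S)) \<le> num_comp V E ?S0 + 1"
      unfolding num_comp_def by (rule ssubst) (rule claw_free_card_components_insert[OF cf W])
    moreover have "card (components (E - {{u, v}}) (V - S)) \<le> card (components E (V - S)) + 1"
      using card_components_Diff_edge_le[OF W(1) u] .
    moreover have "card ?S0 = card S - 1" using s by simp
    ultimately have "2 * card ?S0 < num_comp V E ?S0" "2 \<le> num_comp V E ?S0"
      using big S2 by linarith+
    moreover have "?S0 \<subseteq> V" using SV by blast
    ultimately show False using tough unfolding tough_half_iff cutset_def by (metis not_less)
  qed
  moreover have "finite S" using fin SV finite_subset by blast
  ultimately show ?thesis using card_0_eq by fastforce
qed

lemma claw_free_separator_common_neighbour:
  assumes fin: "finite V" and cf: "claw_free V E" and conn: "card (components E V) \<le> 1"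
    and reach: "reach_in (E - {{u, v}}) V u v" and s: "s \<in> V"
    and uv: "u \<in> V - {s}" "v \<in> V - {s}" and sep: "\<not> reach_in (E - {{u, v}}) (V - {s}) u v"
    and three: "3 \<le> card (components (E - {{u, v}}) (V - {s}))"
  shows "{s, u} \<in> E \<and> {s, v} \<in> E"
proof -
  let ?E' = "E - {{u, v}}" and ?W = "V - {s}"
  let ?Cu = "{y. reach_in ?E' ?W u y}" and ?Cv = "{y. reach_in ?E' ?W v y}"
  have "components ?E' V = components E V"
    unfolding components_def reach_in_Diff_edge_if_reach[OF reach] ..
  then have nbr: "\<exists>y\<in>C. {s, y} \<in> ?E'" if "C \<in> components ?E' ?W" for C
    using component_has_neighbour[OF fin _ s that] conn by simp
  have Cu: "?Cu \<in> components ?E' ?W" and Cv: "?Cv \<in> components ?E' ?W"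
    using uv by (auto intro: component_of)
  have uCu: "u \<in> ?Cu" and vCv: "v \<in> ?Cv" and vCu: "v \<notin> ?Cu"
    using sep by (auto intro: reach_in_refl)
  obtain A where A: "A \<in> components ?E' ?W" "A \<noteq> ?Cu" "A \<noteq> ?Cv"
    using three by (rule three_elements) blast
  obtain a where a: "a \<in> A" "{s, a} \<in> ?E'" using nbr[OF A(1)] by blast
  obtain x where x: "x \<in> ?Cu" "{s, x} \<in> ?E'" using nbr[OF Cu] by blast
  obtain y where y: "y \<in> ?Cv" "{s, y} \<in> ?E'" using nbr[OF Cv] by blast
  have W: "a \<in> ?W" "x \<in> ?W" "y \<in> ?W"
    using a x y A(1) Cu Cv components_subset by blast+
  have "u \<notin> A" "v \<notin> A"
    using components_eqI[OF A(1) Cu _ uCu] components_eqI[OF A(1) Cv _ vCv] A(2,3) by blast+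
  \<comment> \<open>a is not an endpoint of uv, so its non-adjacency to the other two components persists in G\<close>
  then have "{x, a} \<notin> E" "{y, a} \<notin> E"
    using components_nonadjacent[OF x(1) a(1) Cu A(1)] components_nonadjacent[OF y(1) a(1) Cv A(1)]
      A(2,3) a(1) by (auto simp: doubleton_eq_iff)
  moreover have "distinct [s, x, y, a]"
    using components_eqI[OF Cu Cv x(1)] components_eqI[OF Cu A(1) x(1)] components_eqI[OF Cv A(1) y(1)]
      x(1) y(1) a(1) A(2,3) vCu vCv W by auto
  ultimately have "{x, y} \<in> E"
    using claw_freeD[OF cf s, of x y a] W x(2) y(2) a(2) by (auto simp: insert_commute)
  moreover have "{x, y} \<notin> ?E'"
    by (rule components_nonadjacent[OF x(1) y(1) Cu Cv]) (use vCv vCu in blast)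
  ultimately have "{x, y} = {u, v}" by blast
  then have "x = u" "y = v" using x(1) vCu by (auto simp: doubleton_eq_iff)
  then show ?thesis using x(2) y(2) by blast
qed

lemma half_tough_edge_separator:
  assumes fin: "finite V" and cf: "claw_free V E" and tough: "tough V E (1/2)"
    and not_tough: "\<not> tough V (E - {{u, v}}) (1/2)"
    and reach: "reach_in (E - {{u, v}}) V u v"
  obtains s where "s \<in> V" "s \<noteq> u" "s \<noteq> v" "{s, u} \<in> E" "{s, v} \<in> E"
    "\<not> reach_in (E - {{u, v}}) (V - {s}) u v"
proof -
  obtain S where cs: "cutset V (E - {{u, v}}) S" and big: "2 * card S < num_comp V (E - {{u, v}}) S"
    using not_tough unfolding tough_half_iff by (auto simp: not_le)
  note sep = violating_set_separates_edge[OF tough cs big]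
  have SV: "S \<subseteq> V" using cs unfolding cutset_def by blast
  have "card S = 1"
    using claw_free_violating_set_singleton[OF fin cf tough SV _ sep(1) reach sep(3)] big
    unfolding num_comp_def by blast
  then obtain s where S: "S = {s}" by (rule card_1_singletonE)
  have "{s, u} \<in> E \<and> {s, v} \<in> E"
    using claw_free_separator_common_neighbour[OF fin cf connected_if_tough[OF tough] reach]
      SV sep big unfolding S num_comp_def by simp
  then show ?thesis using that SV sep unfolding S by blast
qed

section \<open>Cycles and chords\<close>

definition cyclic_nth :: "'a list \<Rightarrow> nat \<Rightarrow> 'a" where
  "cyclic_nth vs l = vs ! (l mod length vs)"

lemma cyclic_nth_eq_iff:
  assumes "distinct vs" "vs \<noteq> []"
  shows "cyclic_nth vs a = cyclic_nth vs b \<longleftrightarrow> a mod length vs = b mod length vs"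
  using assms by (simp add: cyclic_nth_def nth_eq_iff_index_eq)

lemma cyclic_nth_less: "l < length vs \<Longrightarrow> cyclic_nth vs l = vs ! l"
  by (simp add: cyclic_nth_def)

lemma cyclic_nth_add_length: "cyclic_nth vs (length vs + l) = cyclic_nth vs l"
  by (simp add: cyclic_nth_def)

lemma is_cycle_length: "is_cycle V E vs \<Longrightarrow> 3 \<le> length vs"
  by (simp add: is_cycle_def)

lemma is_cycle_cyclic_nth_eq_iff:
  assumes "is_cycle V E vs"
  shows "cyclic_nth vs a = cyclic_nth vs b \<longleftrightarrow> a mod length vs = b mod length vs"
proof (rule cyclic_nth_eq_iff)
  show "distinct vs" using assms unfolding is_cycle_def by blast
  show "vs \<noteq> []" using is_cycle_length[OF assms] by auto
qed

lemma is_cycle_cyclic_nth: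
  assumes "is_cycle V E vs"
  shows "cyclic_nth vs l \<in> V" "{cyclic_nth vs l, cyclic_nth vs (Suc l)} \<in> E"
proof -
  have k: "0 < length vs" using is_cycle_length[OF assms] by linarith
  then show "cyclic_nth vs l \<in> V"
    using assms unfolding is_cycle_def cyclic_nth_def by (meson mod_less_divisor nth_mem subsetD)
  have "{vs ! (l mod length vs), vs ! ((l mod length vs + 1) mod length vs)} \<in> E"
    using assms k unfolding is_cycle_def by simp
  then show "{cyclic_nth vs l, cyclic_nth vs (Suc l)} \<in> E"
    unfolding cyclic_nth_def by (simp add: mod_Suc_eq)
qed

lemma is_cycle_doubleton_eq:
  assumes "is_cycle V E vs" "{cyclic_nth vs a, cyclic_nth vs b} = {cyclic_nth vs c, cyclic_nth vs d}"
  shows "a mod length vs = c mod length vs \<and> b mod length vs = d mod length vs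
    \<or> a mod length vs = d mod length vs \<and> b mod length vs = c mod length vs"
  using assms(2) is_cycle_cyclic_nth_eq_iff[OF assms(1)] by (metis doubleton_eq_iff)

lemma cycle_arc_reach:
  assumes "is_cycle V E vs" "i \<le> m"
    and "\<And>l. i \<le> l \<Longrightarrow> l < m \<Longrightarrow> {cyclic_nth vs l, cyclic_nth vs (Suc l)} \<noteq> e"
    and "\<And>l. i \<le> l \<Longrightarrow> l \<le> m \<Longrightarrow> cyclic_nth vs l \<in> W"
  shows "reach_in (E - {e}) W (cyclic_nth vs i) (cyclic_nth vs m)"
  using assms by (intro reach_in_walk) (auto simp: is_cycle_cyclic_nth)

lemma cycle_reach_Diff_edge:
  assumes cyc: "is_cycle V E vs" and W: "\<And>l. 1 \<le> l \<Longrightarrow> l \<le> length vs \<Longrightarrow> cyclic_nth vs l \<in> W"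
  shows "reach_in (E - {{vs ! 0, vs ! 1}}) W (vs ! 0) (vs ! 1)"
proof -
  define k where "k = length vs"
  have k: "3 \<le> k" using is_cycle_length[OF cyc] unfolding k_def .
  have "vs \<noteq> []" using k unfolding k_def by auto
  then have ends: "cyclic_nth vs 0 = vs ! 0" "cyclic_nth vs 1 = vs ! 1" "cyclic_nth vs k = vs ! 0"
    using cyclic_nth_less[of 0 vs] cyclic_nth_less[of 1 vs] cyclic_nth_add_length[of vs 0] k
    unfolding k_def by auto
  have "{cyclic_nth vs l, cyclic_nth vs (Suc l)} \<noteq> {vs ! 0, vs ! 1}" if "1 \<le> l" "l < k" for l
  proof
    assume "{cyclic_nth vs l, cyclic_nth vs (Suc l)} = {vs ! 0, vs ! 1}"
    then have "l mod k = 0 \<and> Suc l mod k = 1 \<or> l mod k = 1 \<and> Suc l mod k = 0"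
      using is_cycle_doubleton_eq[OF cyc, of l "Suc l" 0 1] k unfolding ends(1,2)[symmetric] k_def
      by simp
    moreover have "l mod k = l" "Suc l mod k = (if Suc l = k then 0 else Suc l)"
      using that by auto
    ultimately show False using that k by (auto split: if_splits)
  qed
  then have "reach_in (E - {{vs ! 0, vs ! 1}}) W (cyclic_nth vs 1) (cyclic_nth vs k)"
    using k W by (intro cycle_arc_reach[OF cyc]) (auto simp: k_def)
  then show ?thesis unfolding ends by (rule reach_in_sym)
qed

lemma cycle_edge_separator_on_cycle:
  assumes cyc: "is_cycle V E vs" and s: "s \<noteq> vs ! 0" "s \<noteq> vs ! 1"
    and sep: "\<not> reach_in (E - {{vs ! 0, vs ! 1}}) (V - {s}) (vs ! 0) (vs ! 1)"
  obtains j where "2 \<le> j" "j < length vs" "s = vs ! j"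
proof (rule ccontr)
  assume off: "\<not> thesis"
  have "cyclic_nth vs l \<in> V - {s}" for l
  proof -
    have "0 < length vs" using is_cycle_length[OF cyc] by linarith
    then have "l mod length vs < length vs" by simp
    then have "cyclic_nth vs l \<noteq> s"
      using that off s unfolding cyclic_nth_def by (metis One_nat_def less_2_cases not_less)
    then show ?thesis using is_cycle_cyclic_nth(1)[OF cyc] by blast
  qed
  then show False using cycle_reach_Diff_edge[OF cyc] sep by blast
qed

lemma cycle_chord_reach:
  assumes cyc: "is_cycle V E vs"
    and ab: "a + 2 \<le> b" "b + 2 \<le> length vs + a" "b < length vs"
    and s: "s \<noteq> vs ! a" "s \<noteq> vs ! b"
  shows "reach_in (E - {{vs ! a, vs ! b}}) (V - {s}) (vs ! a) (vs ! b)"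
proof -
  define k where "k = length vs"
  have ends: "cyclic_nth vs a = vs ! a" "cyclic_nth vs b = vs ! b" "cyclic_nth vs (k + a) = vs ! a"
    using ab cyclic_nth_add_length[of vs a] by (simp_all add: cyclic_nth_less k_def)
  have chord: "{cyclic_nth vs l, cyclic_nth vs (Suc l)} \<noteq> {vs ! a, vs ! b}" for l
  proof
    assume "{cyclic_nth vs l, cyclic_nth vs (Suc l)} = {vs ! a, vs ! b}"
    then have "l mod k = a \<and> Suc l mod k = b \<or> l mod k = b \<and> Suc l mod k = a"
      using is_cycle_doubleton_eq[OF cyc, of l "Suc l" a b] ab
      unfolding ends(1,2)[symmetric] k_def by simp
    then show False using ab unfolding mod_Suc[of l k] by (auto simp: k_def split: if_splits)
  qed
  have in_V: "cyclic_nth vs l \<in> V" for l by (rule is_cycle_cyclic_nth(1)[OF cyc])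
  show ?thesis
  proof (cases "\<exists>c. a < c \<and> c < b \<and> s = vs ! c")
    case True
    \<comment> \<open>s is an inner vertex of the arc from a to b, so go around the other way\<close>
    then obtain c where c: "a < c" "c < b" "s = vs ! c" by blast
    have "cyclic_nth vs l \<noteq> s" if "b \<le> l" "l \<le> k + a" for l
    proof
      assume "cyclic_nth vs l = s"
      moreover have "s = cyclic_nth vs c" using c ab by (simp add: cyclic_nth_less)
      ultimately have "l mod k = c"
        using is_cycle_cyclic_nth_eq_iff[OF cyc, of l c] c ab by (simp add: k_def)
      moreover have "l mod k = (if l < k then l else l - k)"
        using that ab by (auto simp: k_def le_mod_geq)
      ultimately show False using that c by (auto split: if_splits)
    qed
    then have "reach_in (E - {{vs ! a, vs ! b}}) (V - {s}) (cyclic_nth vs b) (cyclic_nth vs (k + a))"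
      using ab chord in_V by (intro cycle_arc_reach[OF cyc]) (auto simp: k_def)
    then show ?thesis unfolding ends by (rule reach_in_sym)
  next
    case False
    have "cyclic_nth vs l \<noteq> s" if "a \<le> l" "l \<le> b" for l
      using that False s ab cyclic_nth_less[of l vs] by (metis le_less le_less_trans)
    then have "reach_in (E - {{vs ! a, vs ! b}}) (V - {s}) (cyclic_nth vs a) (cyclic_nth vs b)"
      using ab chord in_V by (intro cycle_arc_reach[OF cyc]) auto
    then show ?thesis unfolding ends .
  qed
qed

lemma minimally_tough_halfD:
  assumes "minimally_tough V E (1/2)"
  shows "tough V E (1/2)" "e \<in> E \<Longrightarrow> \<not> tough V (E - {e}) (1/2)"
proof -
  have "toughness V E = ereal (1/2)" using assms unfolding minimally_tough_def by blast
  then show "tough V E (1/2)" by (rule tough_toughness) simp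
  show "\<not> tough V (E - {e}) (1/2)" if "e \<in> E"
    using assms that tough_le_toughness[of "1/2" V "E - {e}"]
    unfolding minimally_tough_def by auto
qed

lemma critical_half_tough_cycle_no_chord:
  assumes fin: "finite V" and cf: "claw_free V E" and tough: "tough V E (1/2)"
    and crit: "\<And>e. e \<in> E \<Longrightarrow> \<not> tough V (E - {e}) (1/2)"
    and cyc: "is_cycle V E vs"
    and ab: "a + 2 \<le> b" "b + 2 \<le> length vs + a" "b < length vs"
  shows "{vs ! a, vs ! b} \<notin> E"
proof
  assume chord: "{vs ! a, vs ! b} \<in> E"
  have "distinct vs" using cyc unfolding is_cycle_def by blast
  then have "vs ! Suc a \<noteq> vs ! a" "vs ! Suc a \<noteq> vs ! b"
    using ab by (simp_all add: nth_eq_iff_index_eq)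
  then have "reach_in (E - {{vs ! a, vs ! b}}) (V - {vs ! Suc a}) (vs ! a) (vs ! b)"
    by (rule cycle_chord_reach[OF cyc ab])
  then have "reach_in (E - {{vs ! a, vs ! b}}) V (vs ! a) (vs ! b)"
    by (rule reach_in_mono) auto
  then obtain s where "s \<in> V" "s \<noteq> vs ! a" "s \<noteq> vs ! b" "{s, vs ! a} \<in> E" "{s, vs ! b} \<in> E"
    "\<not> reach_in (E - {{vs ! a, vs ! b}}) (V - {s}) (vs ! a) (vs ! b)"
    by (rule half_tough_edge_separator[OF fin cf tough crit[OF chord]])
  then show False using cycle_chord_reach[OF cyc ab] by blast
qed

theorem mainTheorem11:
  fixes V :: "'a set" and E :: "'a set set"
  assumes "simple_graph V E"
    and "minimally_tough V E (1/2)"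
    and "claw_free V E"
  shows "\<forall>vs. is_cycle V E vs \<longrightarrow> length vs = 3"
proof (intro allI impI)
  fix vs assume cyc: "is_cycle V E vs"
  have fin: "finite V" using assms(1) unfolding simple_graph_def by blast
  note tough = minimally_tough_halfD(1)[OF assms(2)]
    and crit = minimally_tough_halfD(2)[OF assms(2)]
  show "length vs = 3"
  proof (rule ccontr)
    assume "length vs \<noteq> 3"
    then have k: "4 \<le> length vs" using is_cycle_length[OF cyc] by simp
    have "{vs ! 0, vs ! 1} \<in> E"
      using cyc k unfolding is_cycle_def by (elim conjE allE[of _ 0]) auto
    moreover have "reach_in (E - {{vs ! 0, vs ! 1}}) V (vs ! 0) (vs ! 1)"
      using cycle_reach_Diff_edge[OF cyc] is_cycle_cyclic_nth(1)[OF cyc] by blast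
    ultimately obtain s where s: "s \<in> V" "s \<noteq> vs ! 0" "s \<noteq> vs ! 1"
      "{s, vs ! 0} \<in> E" "{s, vs ! 1} \<in> E"
      "\<not> reach_in (E - {{vs ! 0, vs ! 1}}) (V - {s}) (vs ! 0) (vs ! 1)"
      by (rule half_tough_edge_separator[OF fin assms(3) tough crit])
    obtain j where j: "2 \<le> j" "j < length vs" "s = vs ! j"
      by (rule cycle_edge_separator_on_cycle[OF cyc s(2,3,6)])
    \<comment> \<open>s lies on the cycle, so one of its edges to the endpoints of the edge is a chord\<close>
    have "{vs ! 0, vs ! j} \<in> E" "{vs ! 1, vs ! j} \<in> E"
      using s(4,5) j(3) by (simp_all add: insert_commute)
    then show False
      using critical_half_tough_cycle_no_chord[OF fin assms(3) tough crit cyc, of 0 j]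
        critical_half_tough_cycle_no_chord[OF fin assms(3) tough crit cyc, of 1 j] j k
      by (cases "j + 2 \<le> length vs") auto
  qed
qed

end
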